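(* Let $n$ be even and let $\nu_\mathcal{G}$ be the uniform measure on a finite set $\mathcal{G}$ of two-qudit unitaries (not necessarily closed under inverses), $\mathcal{G}^\dagger$ the set of inverses. Then for every positive integer $t$, $$g\big(\nu^{(n)}_{par}(\mathcal{G})*\nu^{(n)}_{par}(\mathcal{G}^\dagger),t\big)\ge\frac12\,g\big(\nu^{(n)}_{par}(\mathcal{G}\mathcal{G}^\dagger),t\big).$$
   Context: Consider $n$ qudits on a line, each of dimension $d$. For a probability measure $\eta$ on $\mathrm{U}(d^2)$, $\nu^{(n)}_{par}(\eta)$ is the probability measure on $\mathrm{U}(d^n)$ that with probability $1/2$ applies $U_{12}\otimes U_{34}\otimes\cdots\otimes U_{n-1,n}$ and with probability $1/2$ applies $U_{23}\otimes U_{45}\otimes\cdots\otimes U_{n-2,n-1}$ (identity on qudits $1$ and $n$), each $U_{ij}$ drawn independently from $\eta$ and acting on qudits $i,j$. $\nu^{(n)}_{par}(\mathcal{G})$, $\nu^{(n)}_{par}(\mathcal{G}^\dagger)$, $\nu^{(n)}_{par}(\mathcal{G}\mathcal{G}^\dagger)$ correspond to $\eta=\nu_\mathcal{G}$, the uniform measure on $\mathcal{G}^\dagger$, and $\nu_\mathcal{G}*\nu_{\mathcal{G}^\dagger}$. For a probability measure $\nu$ on $\mathrm{U}(D)$: $T_{\nu,t}=\int\mathrm{d}\nu(U)U^{\otimes t}\otimes\bar U^{\otimes t}$, $g(\nu,t)=1-\|T_{\nu,t}-T_{\mu,t}\|_\infty$ with $\mu$ the Haar measure, and $*$ is convolution.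 *)

theory Defs
  imports "HOL-Analysis.Analysis" "HOL-Probability.Probability"
begin

text \<open>Square matrices of size D are represented as functions nat => nat => complex,
  with entries outside the index range 0..<D meaningless (forced to 0 where relevant).\<close>

type_synonym cmat = "nat \<Rightarrow> nat \<Rightarrow> complex"

definition mmul :: "nat \<Rightarrow> cmat \<Rightarrow> cmat \<Rightarrow> cmat" where
  "mmul D A B = (\<lambda>i j. if i < D \<and> j < D then (\<Sum>k<D. A i k * B k j) else 0)"

definition adj :: "cmat \<Rightarrow> cmat" where
  "adj A = (\<lambda>i j. cnj (A j i))"

definition idm :: "nat \<Rightarrow> cmat" where
  "idm D = (\<lambda>i j. if i < D \<and> j < D \<and> i = j then 1 else 0)"

definition unitary_group :: "nat \<Rightarrow> cmat set" where
  "unitary_group D = {U. (\<forall>i j. \<not> (i < D \<and> j < D) \<longrightarrow> U i j = 0)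
                         \<and> mmul D (adj U) U = idm D \<and> mmul D U (adj U) = idm D}"

definition vnorm :: "nat \<Rightarrow> (nat \<Rightarrow> complex) \<Rightarrow> real" where
  "vnorm N x = sqrt (\<Sum>i<N. (cmod (x i))\<^sup>2)"

definition mvmul :: "nat \<Rightarrow> cmat \<Rightarrow> (nat \<Rightarrow> complex) \<Rightarrow> (nat \<Rightarrow> complex)" where
  "mvmul N A x = (\<lambda>i. \<Sum>j<N. A i j * x j)"

definition opnorm :: "nat \<Rightarrow> cmat \<Rightarrow> real" where
  "opnorm N A = Sup ((\<lambda>x. vnorm N (mvmul N A x)) ` {x. vnorm N x \<le> 1})"

text \<open>k-th base-D digit of r; used to identify 0..<D^m with ({0..<D})^m.\<close>
definition dig :: "nat \<Rightarrow> nat \<Rightarrow> nat \<Rightarrow> nat" where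
  "dig D k r = r div D ^ k mod D"

text \<open>Entry (r,c) of U^{\<otimes>t} \<otimes> conj(U)^{\<otimes>t}, a D^(2t) x D^(2t) matrix.\<close>
definition tens_entry :: "nat \<Rightarrow> nat \<Rightarrow> cmat \<Rightarrow> nat \<Rightarrow> nat \<Rightarrow> complex" where
  "tens_entry D t U r c =
     (\<Prod>k<t. U (dig D k r) (dig D k c)) * (\<Prod>k<t. cnj (U (dig D (t + k) r) (dig D (t + k) c)))"

definition moment_op :: "cmat measure \<Rightarrow> nat \<Rightarrow> nat \<Rightarrow> cmat" where
  "moment_op M D t = (\<lambda>r c. if r < D ^ (2 * t) \<and> c < D ^ (2 * t)
                             then integral\<^sup>L M (\<lambda>U. tens_entry D t U r c) else 0)"

definition is_haar :: "nat \<Rightarrow> cmat measure \<Rightarrow> bool" where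
  "is_haar D \<mu> \<longleftrightarrow> prob_space \<mu> \<and> sets \<mu> = sets borel \<and>
     unitary_group D \<in> sets \<mu> \<and> emeasure \<mu> (unitary_group D) = 1 \<and>
     (\<forall>V \<in> unitary_group D. distr \<mu> borel (\<lambda>U. mmul D V U) = \<mu>)"

definition gap :: "nat \<Rightarrow> cmat measure \<Rightarrow> cmat measure \<Rightarrow> nat \<Rightarrow> real" where
  "gap D \<mu> \<nu> t = 1 - opnorm (D ^ (2 * t))
       (\<lambda>r c. moment_op \<nu> D t r c - moment_op \<mu> D t r c)"

definition conv :: "nat \<Rightarrow> cmat pmf \<Rightarrow> cmat pmf \<Rightarrow> cmat pmf" where
  "conv D p q = map_pmf (\<lambda>(U, V). mmul D U V) (pair_pmf p q)"

text \<open>Qudits are numbered 0..<n; basis state x < d^n has qudit k in state dig d k x.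
  A two-qudit gate acting on qudits (s, s+1) is a d^2 x d^2 matrix whose index for the
  local state (a,b) is a*d + b.\<close>
definition pair_idx :: "nat \<Rightarrow> nat \<Rightarrow> nat \<Rightarrow> nat" where
  "pair_idx d s x = dig d s x * d + dig d (s + 1) x"

text \<open>Layer: gates g s on qudits (s,s+1) for s in S, identity on uncovered qudits.\<close>
definition layer_mat :: "nat \<Rightarrow> nat \<Rightarrow> nat set \<Rightarrow> (nat \<Rightarrow> cmat) \<Rightarrow> cmat" where
  "layer_mat d n S g = (\<lambda>x y. if x < d ^ n \<and> y < d ^ n then
      (\<Prod>s\<in>S. g s (pair_idx d s x) (pair_idx d s y)) *
      (\<Prod>k\<in>{k. k < n \<and> k \<notin> S \<and> \<not> (k \<ge> 1 \<and> k - 1 \<in> S)}.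
          (if dig d k x = dig d k y then 1 else 0))
    else 0)"

definition layer_pmf :: "nat \<Rightarrow> nat \<Rightarrow> nat set \<Rightarrow> cmat pmf \<Rightarrow> cmat pmf" where
  "layer_pmf d n S \<eta> = map_pmf (layer_mat d n S) (Pi_pmf S (\<lambda>_ _. 0) (\<lambda>_. \<eta>))"

text \<open>\<nu>_par^{(n)}(\<eta>): with prob. 1/2 the layer U_{12} \<otimes> U_{34} \<otimes> ..., with prob. 1/2 the
  layer U_{23} \<otimes> U_{45} \<otimes> ... (0-based: gates starting at even resp. odd positions).\<close>
definition nu_par :: "nat \<Rightarrow> nat \<Rightarrow> cmat pmf \<Rightarrow> cmat pmf" where
  "nu_par d n \<eta> = bind_pmf (bernoulli_pmf (1/2)) (\<lambda>b.
     if b then layer_pmf d n {s. even s \<and> s + 1 < n} \<eta>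
          else layer_pmf d n {s. odd s \<and> s + 1 < n} \<eta>)"

end

theory Submission
  imports Defs
begin

(* Each of nu_par(G) and nu_par(G\<^sup>\<dagger>) is the even mixture of an even-layer and an odd-layer
   ensemble, and a layer of products is the product of the layers. Hence nu_par(G) * nu_par(G\<^sup>\<dagger>)
   is the even mixture of nu_par(G G\<^sup>\<dagger>) (the even-even and odd-odd terms) and a cross ensemble
   (the even-odd and odd-even terms). The gap is concave under mixing, since the moment operator
   is affine in the measure and the operator norm is convex, and it is nonnegative for every
   finitely supported ensemble \<nu> of unitaries: left invariance of the Haar measure \<mu> gives
   T\<^sub>\<nu> T\<^sub>\<mu> = T\<^sub>\<mu>, so T\<^sub>\<nu> - T\<^sub>\<mu> = T\<^sub>\<nu> (1 - T\<^sub>\<mu>), where T\<^sub>\<nu> is an average of unitaries and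
   1 - T\<^sub>\<mu> is a contraction because \<langle>T\<^sub>\<mu> x, T\<^sub>\<mu> x\<rangle> = \<langle>T\<^sub>\<mu> x, x\<rangle>. *)

section \<open>Base-d digits\<close>

lemma dig_less: "0 < D \<Longrightarrow> dig D k r < D"
  by (simp add: dig_def)

lemma dig_0: "dig D 0 x = x mod D"
  by (simp add: dig_def)

lemma dig_Suc: "dig D (Suc k) x = dig D k (x div D)"
  by (simp add: dig_def div_mult2_eq mult.commute)

lemma dig_Suc_Suc: "dig d (Suc (Suc k)) x = dig d k (x div d\<^sup>2)"
  by (simp add: dig_def power2_eq_square div_mult2_eq ac_simps)

lemma add_mult_less_mult: "a < D \<Longrightarrow> w < M \<Longrightarrow> a + D * w < D * (M::nat)"
proof -
  assume "a < D" "w < M"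
  then have "a + D * w < D * (w + 1)" by simp
  also have "\<dots> \<le> D * M" using \<open>w < M\<close> by (intro mult_left_mono) auto
  finally show ?thesis .
qed

lemma mod_div_less:
  fixes x D M :: nat
  assumes "0 < D" "x < D * M"
  shows "x mod D < D" "x div D < M"
  using assms by (simp, metis less_mult_imp_div_less mult.commute)

lemma mod_square_div: "(x::nat) mod (d * d) div d = x div d mod d"
proof (cases "d = 0")
  case False
  have "x mod (d * d) = x mod d + (x div d mod d) * d" by (simp add: mod_mult2_eq)
  then show ?thesis using False by simp
qed simp

lemma nat_eq_iff_mod_div: "(x::nat) = y \<longleftrightarrow> x mod D = y mod D \<and> x div D = y div D"
  by (metis div_mult_mod_eq)

lemma sum_lessThan_mult_split:
  fixes f :: "nat \<Rightarrow> 'a::comm_monoid_add"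
  assumes "0 < D"
  shows "(\<Sum>z<D * M. f z) = (\<Sum>a<D. \<Sum>y<M. f (a + D * y))"
proof -
  have "(\<Sum>z<D * M. f z) = (\<Sum>p\<in>{..<D} \<times> {..<M}. f (fst p + D * snd p))"
  proof (rule sum.reindex_bij_witness[where i="\<lambda>p. fst p + D * snd p"
                                        and j="\<lambda>z. (z mod D, z div D)"])
    fix p assume "p \<in> {..<D} \<times> {..<M}"
    then show "fst p + D * snd p \<in> {..<D * M}"
      and "((fst p + D * snd p) mod D, (fst p + D * snd p) div D) = p"
      using assms by (auto simp: add_mult_less_mult)
  next
    fix z assume "z \<in> {..<D * M}"
    then show "(z mod D, z div D) \<in> {..<D} \<times> {..<M}"
      using assms by (auto simp: less_mult_imp_div_less mult.commute)
  qed auto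
  also have "\<dots> = (\<Sum>a<D. \<Sum>y<M. f (a + D * y))"
    by (simp add: sum.cartesian_product split_beta)
  finally show ?thesis .
qed

lemma sum_digits_prod:
  fixes F :: "nat \<Rightarrow> nat \<Rightarrow> 'a::comm_semiring_1"
  assumes "0 < D"
  shows "(\<Sum>z<D ^ m. \<Prod>k<m. F k (dig D k z)) = (\<Prod>k<m. \<Sum>j<D. F k j)"
proof (induction m arbitrary: F)
  case 0
  then show ?case by simp
next
  case (Suc m)
  have "(\<Sum>z<D ^ Suc m. \<Prod>k<Suc m. F k (dig D k z))
      = (\<Sum>a<D. \<Sum>y<D ^ m. \<Prod>k<Suc m. F k (dig D k (a + D * y)))"
    using assms by (simp add: sum_lessThan_mult_split)
  also have "\<dots> = (\<Sum>a<D. \<Sum>y<D ^ m. F 0 a * (\<Prod>k<m. F (Suc k) (dig D k y)))"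
    using assms by (intro sum.cong refl) (simp only: prod.lessThan_Suc_shift, simp add: dig_0 dig_Suc)
  also have "\<dots> = (\<Sum>a<D. F 0 a) * (\<Prod>k<m. \<Sum>j<D. F (Suc k) j)"
    by (simp add: sum_product Suc.IH[of "\<lambda>k. F (Suc k)", symmetric])
  also have "\<dots> = (\<Prod>k<Suc m. \<Sum>j<D. F k j)"
    by (simp only: prod.lessThan_Suc_shift)
  finally show ?case .
qed

lemma digits_eq_imp_eq:
  assumes "0 < D" "a < D ^ m" "b < D ^ m" "\<forall>k<m. dig D k a = dig D k b"
  shows "a = b"
  using assms(2-4)
proof (induction m arbitrary: a b)
  case 0
  then show ?case by simp
next
  case (Suc m)
  have "a div D = b div D"
    using Suc.prems assms(1)
    by (intro Suc.IH) (auto simp: less_mult_imp_div_less mult.commute dig_Suc[symmetric])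
  moreover have "a mod D = b mod D"
    using Suc.prems(3)[rule_format, of 0] by (simp add: dig_0)
  ultimately show ?case by (metis nat_eq_iff_mod_div)
qed

section \<open>Matrices and tensor powers\<close>

definition zero_outside :: "nat \<Rightarrow> cmat \<Rightarrow> bool" where
  "zero_outside D A \<longleftrightarrow> (\<forall>i j. \<not> (i < D \<and> j < D) \<longrightarrow> A i j = 0)"

lemma zero_outside_mmul: "zero_outside D (mmul D A B)"
  by (simp add: zero_outside_def mmul_def)

lemma zero_outside_adj: "zero_outside D A \<Longrightarrow> zero_outside D (adj A)"
  by (auto simp: zero_outside_def adj_def)

lemma zero_outside_idm: "zero_outside D (idm D)"
  by (simp add: zero_outside_def idm_def)

lemma mmul_assoc: "mmul D (mmul D A B) C = mmul D A (mmul D B C)"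
proof -
  have "(\<Sum>k<D. (\<Sum>l<D. A i l * B l k) * C k j) = (\<Sum>l<D. A i l * (\<Sum>k<D. B l k * C k j))" for i j
    by (simp add: sum_distrib_left sum_distrib_right mult.assoc) (rule sum.swap)
  then show ?thesis by (auto simp: mmul_def fun_eq_iff intro!: sum.cong)
qed

lemma adj_mmul: "adj (mmul D A B) = mmul D (adj B) (adj A)"
  by (auto simp: adj_def mmul_def fun_eq_iff mult.commute)

lemma mmul_idm_left: "zero_outside D A \<Longrightarrow> mmul D (idm D) A = A"
  by (auto simp: mmul_def idm_def zero_outside_def fun_eq_iff if_distrib[of "\<lambda>c. c * _"] cong: if_cong)

lemma adj_unitary: "U \<in> unitary_group D \<Longrightarrow> adj U \<in> unitary_group D"
  unfolding unitary_group_def by (auto simp: adj_def)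

lemma mmul_unitary:
  assumes "A \<in> unitary_group D" "B \<in> unitary_group D"
  shows "mmul D A B \<in> unitary_group D"
proof -
  have A: "mmul D (adj A) A = idm D" "mmul D A (adj A) = idm D" "zero_outside D A"
   and B: "mmul D (adj B) B = idm D" "mmul D B (adj B) = idm D" "zero_outside D B"
    using assms by (auto simp: unitary_group_def zero_outside_def)
  have "mmul D (adj (mmul D A B)) (mmul D A B) = mmul D (adj B) (mmul D (mmul D (adj A) A) B)"
   and "mmul D (mmul D A B) (adj (mmul D A B)) = mmul D A (mmul D (mmul D B (adj B)) (adj A))"
    by (simp_all add: adj_mmul mmul_assoc)
  then have "mmul D (adj (mmul D A B)) (mmul D A B) = idm D"
    and "mmul D (mmul D A B) (adj (mmul D A B)) = idm D"
    by (simp_all add: A B mmul_idm_left zero_outside_adj)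
  then show ?thesis
    using zero_outside_mmul[of D A B] by (simp add: unitary_group_def zero_outside_def)
qed

lemma norm_unitary_entry_le_1:
  assumes "U \<in> unitary_group D"
  shows "cmod (U i j) \<le> 1"
proof (cases "i < D \<and> j < D")
  case False
  then show ?thesis using assms by (simp add: unitary_group_def)
next
  case True
  have "mmul D (adj U) U j j = idm D j j" using assms by (simp add: unitary_group_def)
  then have "(\<Sum>k<D. complex_of_real ((cmod (U k j))\<^sup>2)) = 1"
    using True by (simp add: mmul_def adj_def idm_def complex_norm_square mult.commute del: of_real_power)
  then have "(\<Sum>k<D. (cmod (U k j))\<^sup>2) = 1"
    by (metis of_real_eq_1_iff of_real_sum)
  moreover have "(cmod (U i j))\<^sup>2 \<le> (\<Sum>k<D. (cmod (U k j))\<^sup>2)"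
    using True by (intro member_le_sum) auto
  ultimately show ?thesis by (simp add: power_le_one_iff abs_le_square_iff)
qed

lemma prod_lessThan_add:
  fixes f :: "nat \<Rightarrow> 'a::comm_monoid_mult"
  shows "(\<Prod>k<a + b. f k) = (\<Prod>k<a. f k) * (\<Prod>k<b. f (a + k))"
  by (induction b) (simp_all add: mult.assoc)

lemma tens_entry_prod:
  "tens_entry D t U r c = (\<Prod>k<t + t. if k < t then U (dig D k r) (dig D k c)
                                     else cnj (U (dig D k r) (dig D k c)))"
  by (simp add: tens_entry_def prod_lessThan_add)

lemma tens_entry_mmul:
  assumes "0 < D"
  shows "tens_entry D t (mmul D U V) r c
       = (\<Sum>z<D ^ (2 * t). tens_entry D t U r z * tens_entry D t V z c)"
proof -
  define F where "F k j = (if k < t then U (dig D k r) j * V j (dig D k c)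
                           else cnj (U (dig D k r) j) * cnj (V j (dig D k c)))" for k j
  have "tens_entry D t (mmul D U V) r c = (\<Prod>k<t + t. \<Sum>j<D. F k j)"
    unfolding tens_entry_prod F_def using dig_less[OF assms]
    by (intro prod.cong) (simp_all add: mmul_def)
  also have "\<dots> = (\<Sum>z<D ^ (t + t). \<Prod>k<t + t. F k (dig D k z))"
    by (rule sum_digits_prod[OF assms, symmetric])
  also have "\<dots> = (\<Sum>z<D ^ (2 * t). tens_entry D t U r z * tens_entry D t V z c)"
    unfolding mult_2 tens_entry_prod prod.distrib[symmetric] F_def
    by (intro sum.cong prod.cong) simp_all
  finally show ?thesis .
qed

lemma tens_entry_adj: "tens_entry D t (adj U) r c = cnj (tens_entry D t U c r)"
  by (simp add: tens_entry_def adj_def)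

lemma tens_entry_idm:
  assumes "0 < D" "r < D ^ (2 * t)" "c < D ^ (2 * t)"
  shows "tens_entry D t (idm D) r c = (if r = c then 1 else 0)"
proof -
  have "tens_entry D t (idm D) r c = (\<Prod>k<t + t. if dig D k r = dig D k c then 1 else 0)"
    unfolding tens_entry_prod using assms(1) by (intro prod.cong) (auto simp: idm_def dig_less)
  also have "\<dots> = (if \<forall>k<t + t. dig D k r = dig D k c then 1 else 0)"
    by (auto simp: prod.neutral prod_zero)
  also have "\<dots> = (if r = c then 1 else 0)"
    using digits_eq_imp_eq[OF assms(1), of r "t + t" c] assms by (auto simp: mult_2)
  finally show ?thesis .
qed

lemma tens_entry_unitary_orthonormal:
  assumes "0 < D" "U \<in> unitary_group D" "a < D ^ (2 * t)" "b < D ^ (2 * t)"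
  shows "(\<Sum>r<D ^ (2 * t). cnj (tens_entry D t U r a) * tens_entry D t U r b) = (if a = b then 1 else 0)"
proof -
  have "mmul D (adj U) U = idm D" using assms by (simp add: unitary_group_def)
  then show ?thesis
    using tens_entry_mmul[OF assms(1), of t "adj U" U a b] tens_entry_idm assms
    by (simp add: tens_entry_adj)
qed

lemma norm_tens_entry_le_1:
  "U \<in> unitary_group D \<Longrightarrow> cmod (tens_entry D t U r c) \<le> 1"
  unfolding tens_entry_prod prod_norm[symmetric]
  by (intro prod_le_1) (auto simp: norm_unitary_entry_le_1)

section \<open>Layers of two-qudit gates\<close>

definition kron :: "nat \<Rightarrow> nat \<Rightarrow> cmat \<Rightarrow> cmat \<Rightarrow> cmat" where
  "kron D M A B = (\<lambda>x y. if x < D * M \<and> y < D * M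
                          then A (x mod D) (y mod D) * B (x div D) (y div D) else 0)"

lemma kron_out: "\<not> (x < D * M \<and> y < D * M) \<Longrightarrow> kron D M A B x y = 0"
  unfolding kron_def by (rule if_not_P)

lemma mmul_kron:
  assumes "0 < D"
  shows "mmul (D * M) (kron D M A B) (kron D M A' B') = kron D M (mmul D A A') (mmul M B B')"
proof (intro ext)
  fix x y
  show "mmul (D * M) (kron D M A B) (kron D M A' B') x y = kron D M (mmul D A A') (mmul M B B') x y"
  proof (cases "x < D * M \<and> y < D * M")
    case True
    then have "mmul (D * M) (kron D M A B) (kron D M A' B') x y
        = (\<Sum>a<D. \<Sum>w<M. kron D M A B x (a + D * w) * kron D M A' B' (a + D * w) y)"
      using assms by (simp add: mmul_def sum_lessThan_mult_split)
    also have "\<dots> = (\<Sum>a<D. \<Sum>w<M. A (x mod D) a * A' a (y mod D) *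
                                      (B (x div D) w * B' w (y div D)))"
      using True assms by (intro sum.cong refl) (simp add: kron_def add_mult_less_mult)
    also have "\<dots> = mmul D A A' (x mod D) (y mod D) * mmul M B B' (x div D) (y div D)"
      using True mod_div_less[OF assms, of x M] mod_div_less[OF assms, of y M]
      by (simp add: mmul_def sum_product)
    finally show ?thesis using True by (simp add: kron_def)
  next
    case False
    then show ?thesis by (simp only: mmul_def kron_def if_not_P[OF False] if_False)
  qed
qed

lemma kron_idm: "0 < D \<Longrightarrow> kron D M (idm D) (idm M) = idm (D * M)"
  by (auto simp: kron_def idm_def fun_eq_iff mod_div_less intro: nat_eq_iff_mod_div[THEN iffD2])

lemma pair_idx_less: "0 < d \<Longrightarrow> pair_idx d s x < d\<^sup>2"
proof -
  assume "0 < d"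
  then have "dig d s x * d + dig d (s + 1) x < (dig d s x + 1) * d" by (simp add: dig_less)
  also have "\<dots> \<le> d * d" using dig_less[OF \<open>0 < d\<close>, of s x] by (intro mult_right_mono) auto
  finally show ?thesis by (simp add: pair_idx_def power2_eq_square)
qed

lemma pair_idx_Suc: "pair_idx d (Suc s) x = pair_idx d s (x div d)"
  by (simp add: pair_idx_def dig_Suc)

lemma pair_idx_Suc_Suc: "pair_idx d (Suc (Suc s)) x = pair_idx d s (x div d\<^sup>2)"
  by (simp add: pair_idx_def dig_def power2_eq_square div_mult2_eq ac_simps)

lemma pair_idx_0_mod: "pair_idx d 0 (x mod d\<^sup>2) = pair_idx d 0 x"
  by (simp add: pair_idx_def dig_def power2_eq_square mod_square_div mod_mod_cancel)

lemma pair_idx_0_involution: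
  assumes "a < d\<^sup>2"
  shows "pair_idx d 0 (pair_idx d 0 a) = a"
proof -
  from assms have "0 < d" by (cases d) auto
  have "a div d < d" using assms by (simp add: power2_eq_square less_mult_imp_div_less)
  then have "pair_idx d 0 a = a mod d * d + a div d" by (simp add: pair_idx_def dig_def)
  then show ?thesis using \<open>a div d < d\<close> \<open>0 < d\<close> by (simp add: pair_idx_def dig_def)
qed

lemma bij_betw_pair_idx_0: "0 < d \<Longrightarrow> bij_betw (pair_idx d 0) {..<d\<^sup>2} {..<d\<^sup>2}"
  by (rule bij_betw_byWitness[where f'="pair_idx d 0"])
     (auto simp: pair_idx_0_involution pair_idx_less)

text \<open>A gate on qudits 0 and 1 indexes the local basis state by pair_idx d 0 x, with qudit 0 as
  the high digit, whereas in x mod d^2 qudit 0 is the low digit; gate_local converts a gate to the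
  latter convention.\<close>
definition gate_local :: "nat \<Rightarrow> cmat \<Rightarrow> cmat" where
  "gate_local d A = (\<lambda>a b. if a < d\<^sup>2 \<and> b < d\<^sup>2 then A (pair_idx d 0 a) (pair_idx d 0 b) else 0)"

lemma mmul_gate_local:
  assumes "0 < d"
  shows "mmul (d\<^sup>2) (gate_local d A) (gate_local d B) = gate_local d (mmul (d\<^sup>2) A B)"
proof (intro ext)
  fix a b
  have "(\<Sum>c<d\<^sup>2. A (pair_idx d 0 a) (pair_idx d 0 c) * B (pair_idx d 0 c) (pair_idx d 0 b))
      = (\<Sum>c<d\<^sup>2. A (pair_idx d 0 a) c * B c (pair_idx d 0 b))"
    by (rule sum.reindex_bij_betw[OF bij_betw_pair_idx_0[OF assms]])
  then show "mmul (d\<^sup>2) (gate_local d A) (gate_local d B) a b = gate_local d (mmul (d\<^sup>2) A B) a b"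
    using pair_idx_less[OF assms] by (simp add: mmul_def gate_local_def)
qed

lemma gate_local_idm:
  assumes "0 < d"
  shows "gate_local d (idm (d\<^sup>2)) = idm (d\<^sup>2)"
proof -
  have "pair_idx d 0 a = pair_idx d 0 b \<longleftrightarrow> a = b" if "a < d\<^sup>2" "b < d\<^sup>2" for a b
    using that by (metis pair_idx_0_involution)
  then show ?thesis by (auto simp: gate_local_def idm_def fun_eq_iff pair_idx_less assms)
qed

definition valid_layer :: "nat \<Rightarrow> nat set \<Rightarrow> bool" where
  "valid_layer n S \<longleftrightarrow> (\<forall>s\<in>S. s + 1 < n \<and> s + 1 \<notin> S)"

lemma valid_layer_finite: "valid_layer n S \<Longrightarrow> finite S"
  by (rule finite_subset[of _ "{..<n}"]) (auto simp: valid_layer_def)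

lemma valid_layer_induct [consumes 1, case_names empty skip pair]:
  assumes "valid_layer n S"
    and "P 0 {}"
    and "\<And>m S. valid_layer m S \<Longrightarrow> P m S \<Longrightarrow> P (Suc m) (Suc ` S)"
    and "\<And>m S. valid_layer m S \<Longrightarrow> P m S \<Longrightarrow> P (Suc (Suc m)) (insert 0 ((\<lambda>s. Suc (Suc s)) ` S))"
  shows "P n S"
  using assms(1)
proof (induction n arbitrary: S rule: less_induct)
  case (less n)
  consider "n = 0" | m where "n = Suc m" "0 \<notin> S" | m where "n = Suc (Suc m)" "0 \<in> S"
  proof (cases "0 \<in> S")
    case True
    then have "1 < n" using less.prems by (auto simp: valid_layer_def)
    then have "n = Suc (Suc (n - 2))" by arith
    with True that(3) show ?thesis by blast
  next
    case False
    with that(1,2) show ?thesis by (cases n) auto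
  qed
  then show ?case
  proof cases
    case 1
    then show ?thesis using less.prems assms(2) by (simp add: valid_layer_def)
  next
    case (2 m)
    then have S: "S = Suc ` {s. Suc s \<in> S}"
      by (auto simp: image_iff) (metis not0_implies_Suc)
    have valid: "valid_layer m {s. Suc s \<in> S}"
      using less.prems 2 by (auto simp: valid_layer_def)
    then have "P m {s. Suc s \<in> S}" using less.IH 2 by simp
    then have "P (Suc m) (Suc ` {s. Suc s \<in> S})" by (rule assms(3)[OF valid])
    then show ?thesis using 2 S by simp
  next
    case (3 m)
    then have "1 \<notin> S" using less.prems by (auto simp: valid_layer_def)
    with 3 have S: "S = insert 0 ((\<lambda>s. Suc (Suc s)) ` {s. Suc (Suc s) \<in> S})"
      by (auto simp: image_iff) (metis add_2_eq_Suc le_add_diff_inverse less_2_cases not_less)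
    have valid: "valid_layer m {s. Suc (Suc s) \<in> S}"
      using less.prems 3 by (auto simp: valid_layer_def)
    then have "P m {s. Suc (Suc s) \<in> S}" using less.IH 3 by simp
    then have "P (Suc (Suc m)) (insert 0 ((\<lambda>s. Suc (Suc s)) ` {s. Suc (Suc s) \<in> S}))"
      by (rule assms(4)[OF valid])
    then show ?thesis using 3 S by simp
  qed
qed

definition uncovered :: "nat \<Rightarrow> nat set \<Rightarrow> nat set" where
  "uncovered n S = {k. k < n \<and> k \<notin> S \<and> \<not> (k \<ge> 1 \<and> k - 1 \<in> S)}"

lemma finite_uncovered: "finite (uncovered n S)"
  by (simp add: uncovered_def)

lemma mem_Suc_image: "k \<in> Suc ` A \<longleftrightarrow> k \<ge> 1 \<and> k - 1 \<in> A"
  by (cases k) auto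

lemma uncovered_Suc: "uncovered (Suc m) (Suc ` S) = insert 0 (Suc ` uncovered m S)"
  by (auto simp: uncovered_def mem_Suc_image)

lemma uncovered_pair:
  "uncovered (Suc (Suc m)) (insert 0 ((\<lambda>s. Suc (Suc s)) ` S)) = (\<lambda>k. Suc (Suc k)) ` uncovered m S"
  unfolding uncovered_def image_image[of Suc Suc, symmetric, unfolded comp_def] mem_Suc_image
  by (auto simp: mem_Suc_image)

lemma layer_mat_uncovered:
  "layer_mat d n S g = (\<lambda>x y. if x < d ^ n \<and> y < d ^ n then
      (\<Prod>s\<in>S. g s (pair_idx d s x) (pair_idx d s y)) *
      (\<Prod>k\<in>uncovered n S. if dig d k x = dig d k y then 1 else 0) else 0)"
  unfolding layer_mat_def uncovered_def ..

lemma layer_mat_out: "\<not> (x < d ^ n \<and> y < d ^ n) \<Longrightarrow> layer_mat d n S g x y = 0"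
  unfolding layer_mat_def by (rule if_not_P)

lemma layer_mat_cong:
  assumes "\<And>s. s \<in> S \<Longrightarrow> g s = g' s"
  shows "layer_mat d n S g = layer_mat d n S g'"
proof -
  have "(\<Prod>s\<in>S. g s (pair_idx d s x) (pair_idx d s y)) = (\<Prod>s\<in>S. g' s (pair_idx d s x) (pair_idx d s y))"
    for x y using assms by (intro prod.cong) auto
  then show ?thesis unfolding layer_mat_def by (simp only:)
qed

lemma layer_mat_0: "layer_mat d 0 {} g = idm 1"
  by (simp add: layer_mat_def idm_def fun_eq_iff)

lemma layer_mat_Suc:
  assumes "0 < d"
  shows "layer_mat d (Suc m) (Suc ` S) g = kron d (d ^ m) (idm d) (layer_mat d m S (\<lambda>s. g (Suc s)))"
proof (intro ext)
  fix x y
  show "layer_mat d (Suc m) (Suc ` S) g x y = kron d (d ^ m) (idm d) (layer_mat d m S (\<lambda>s. g (Suc s))) x y"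
  proof (cases "x < d * d ^ m \<and> y < d * d ^ m")
    case True
    have gates: "(\<Prod>s\<in>Suc ` S. g s (pair_idx d s x) (pair_idx d s y))
        = (\<Prod>s\<in>S. g (Suc s) (pair_idx d s (x div d)) (pair_idx d s (y div d)))"
      by (simp add: prod.reindex pair_idx_Suc)
    have idle: "(\<Prod>k\<in>uncovered (Suc m) (Suc ` S). if dig d k x = dig d k y then 1 else 0)
        = (if x mod d = y mod d then 1 else 0) *
          (\<Prod>k\<in>uncovered m S. if dig d k (x div d) = dig d k (y div d) then 1 else (0::complex))"
      by (simp add: uncovered_Suc prod.reindex dig_Suc dig_0 finite_uncovered)
    show ?thesis
      using True mod_div_less[OF assms, of x "d ^ m"] mod_div_less[OF assms, of y "d ^ m"]
      by (simp add: layer_mat_uncovered kron_def idm_def gates idle)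
  next
    case False
    then show ?thesis by (simp add: layer_mat_out kron_out)
  qed
qed

lemma layer_mat_pair:
  assumes "0 < d" "finite S"
  shows "layer_mat d (Suc (Suc m)) (insert 0 ((\<lambda>s. Suc (Suc s)) ` S)) g
       = kron (d\<^sup>2) (d ^ m) (gate_local d (g 0)) (layer_mat d m S (\<lambda>s. g (Suc (Suc s))))"
proof (intro ext)
  fix x y
  have pow: "d ^ Suc (Suc m) = d\<^sup>2 * d ^ m" by (simp add: power2_eq_square)
  have d2: "0 < d\<^sup>2" using assms(1) by simp
  show "layer_mat d (Suc (Suc m)) (insert 0 ((\<lambda>s. Suc (Suc s)) ` S)) g x y
      = kron (d\<^sup>2) (d ^ m) (gate_local d (g 0)) (layer_mat d m S (\<lambda>s. g (Suc (Suc s)))) x y"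
  proof (cases "x < d\<^sup>2 * d ^ m \<and> y < d\<^sup>2 * d ^ m")
    case True
    have gates: "(\<Prod>s\<in>insert 0 ((\<lambda>s. Suc (Suc s)) ` S). g s (pair_idx d s x) (pair_idx d s y))
        = g 0 (pair_idx d 0 x) (pair_idx d 0 y) *
          (\<Prod>s\<in>S. g (Suc (Suc s)) (pair_idx d s (x div d\<^sup>2)) (pair_idx d s (y div d\<^sup>2)))"
      using assms(2) by (subst prod.insert) (auto simp: prod.reindex pair_idx_Suc_Suc inj_on_def)
    have idle: "(\<Prod>k\<in>uncovered (Suc (Suc m)) (insert 0 ((\<lambda>s. Suc (Suc s)) ` S)).
                   if dig d k x = dig d k y then 1 else 0)
        = (\<Prod>k\<in>uncovered m S. if dig d k (x div d\<^sup>2) = dig d k (y div d\<^sup>2) then 1 else (0::complex))"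
      by (simp add: uncovered_pair prod.reindex inj_on_def dig_Suc_Suc)
    show ?thesis
      unfolding layer_mat_uncovered pow
      using True mod_div_less[OF d2, of x "d ^ m"] mod_div_less[OF d2, of y "d ^ m"]
      by (simp add: kron_def gate_local_def pair_idx_0_mod gates idle)
  next
    case False
    moreover from False have "\<not> (x < d ^ Suc (Suc m) \<and> y < d ^ Suc (Suc m))"
      by (simp only: pow not_False_eq_True)
    ultimately show ?thesis by (metis layer_mat_out kron_out)
  qed
qed

lemma layer_mat_mmul:
  assumes "0 < d" "valid_layer n S"
  shows "mmul (d ^ n) (layer_mat d n S g) (layer_mat d n S h)
       = layer_mat d n S (\<lambda>s. mmul (d\<^sup>2) (g s) (h s))"
  using assms(2)
proof (induction n S arbitrary: g h rule: valid_layer_induct)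
  case empty
  then show ?case by (simp add: layer_mat_0 mmul_idm_left zero_outside_idm)
next
  case (skip m S)
  then show ?case
    using assms(1) by (simp add: layer_mat_Suc mmul_kron mmul_idm_left zero_outside_idm)
next
  case (pair m S)
  have "d ^ Suc (Suc m) = d\<^sup>2 * d ^ m" by (simp add: power2_eq_square)
  then show ?case
    using assms(1) pair valid_layer_finite[OF pair(1)]
    by (simp only: layer_mat_pair mmul_kron mmul_gate_local zero_less_power)
qed

lemma layer_mat_idm:
  assumes "0 < d" "valid_layer n S"
  shows "layer_mat d n S (\<lambda>_. idm (d\<^sup>2)) = idm (d ^ n)"
  using assms(2)
proof (induction n S rule: valid_layer_induct)
  case empty
  then show ?case by (simp add: layer_mat_0)
next
  case (skip m S)
  then show ?case using assms(1) by (simp add: layer_mat_Suc kron_idm)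
next
  case (pair m S)
  have "d ^ Suc (Suc m) = d\<^sup>2 * d ^ m" by (simp add: power2_eq_square)
  then show ?case
    using assms(1) pair valid_layer_finite[OF pair(1)]
    by (simp only: layer_mat_pair gate_local_idm kron_idm zero_less_power)
qed

lemma layer_mat_adj: "adj (layer_mat d n S g) = layer_mat d n S (\<lambda>s. adj (g s))"
proof (intro ext)
  fix x y
  show "adj (layer_mat d n S g) x y = layer_mat d n S (\<lambda>s. adj (g s)) x y"
  proof (cases "x < d ^ n \<and> y < d ^ n")
    case True
    have "cnj (\<Prod>s\<in>S. g s (pair_idx d s y) (pair_idx d s x))
        = (\<Prod>s\<in>S. adj (g s) (pair_idx d s x) (pair_idx d s y))"
      by (simp add: adj_def)
    moreover have "cnj (\<Prod>k\<in>uncovered n S. if dig d k y = dig d k x then 1 else 0)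
        = (\<Prod>k\<in>uncovered n S. if dig d k x = dig d k y then 1 else (0::complex))"
      unfolding cnj_prod by (intro prod.cong refl) auto
    ultimately show ?thesis using True unfolding adj_def layer_mat_uncovered by simp
  next
    case False
    moreover have "\<not> (y < d ^ n \<and> x < d ^ n)" using False by auto
    ultimately show ?thesis by (simp add: adj_def layer_mat_out del: de_Morgan_conj)
  qed
qed

lemma layer_mat_unitary:
  assumes "0 < d" "valid_layer n S" "\<And>s. s \<in> S \<Longrightarrow> g s \<in> unitary_group (d\<^sup>2)"
  shows "layer_mat d n S g \<in> unitary_group (d ^ n)"
proof -
  have "mmul (d ^ n) (adj (layer_mat d n S g)) (layer_mat d n S g) = layer_mat d n S (\<lambda>_. idm (d\<^sup>2))"
   and "mmul (d ^ n) (layer_mat d n S g) (adj (layer_mat d n S g)) = layer_mat d n S (\<lambda>_. idm (d\<^sup>2))"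
    using assms(3) unfolding layer_mat_adj layer_mat_mmul[OF assms(1,2)]
    by (auto intro: layer_mat_cong simp: unitary_group_def)
  then show ?thesis
    using layer_mat_out[of _ d n _ S g] layer_mat_idm[OF assms(1,2)] by (simp add: unitary_group_def)
qed

section \<open>Mixtures and convolutions of ensembles\<close>

definition half_mix :: "'a pmf \<Rightarrow> 'a pmf \<Rightarrow> 'a pmf" where
  "half_mix p q = bind_pmf (bernoulli_pmf (1/2)) (\<lambda>b. if b then p else q)"

lemma pmf_half_mix: "pmf (half_mix p q) x = (pmf p x + pmf q x) / 2"
  by (simp add: half_mix_def pmf_bind)

lemma set_pmf_half_mix: "set_pmf (half_mix p q) = set_pmf p \<union> set_pmf q"
  by (auto simp: half_mix_def split: if_splits)

lemma half_mix_interchange: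
  "half_mix (half_mix w x) (half_mix y z) = half_mix (half_mix w z) (half_mix y x)"
  by (rule pmf_eqI) (simp add: pmf_half_mix field_simps)

lemma conv_half_mix_left: "conv D (half_mix p q) r = half_mix (conv D p r) (conv D q r)"
  unfolding conv_def half_mix_def pair_pmf_def map_bind_pmf bind_assoc_pmf
  by (intro bind_pmf_cong refl) simp

lemma conv_half_mix_right: "conv D p (half_mix q r) = half_mix (conv D p q) (conv D p r)"
  unfolding conv_def half_mix_def pair_pmf_def map_bind_pmf bind_assoc_pmf
  by (subst bind_commute_pmf) (intro bind_pmf_cong refl, simp)

lemma conv_half_mix:
  "conv D (half_mix p q) (half_mix p' q')
     = half_mix (half_mix (conv D p p') (conv D q q')) (half_mix (conv D p q') (conv D q p'))"
  unfolding conv_half_mix_left conv_half_mix_right by (rule half_mix_interchange)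

lemma nu_par_half_mix:
  "nu_par d n \<eta>
     = half_mix (layer_pmf d n {s. even s \<and> s + 1 < n} \<eta>) (layer_pmf d n {s. odd s \<and> s + 1 < n} \<eta>)"
  unfolding nu_par_def half_mix_def ..

lemma layer_pmf_conv:
  assumes "0 < d" "valid_layer n S"
  shows "layer_pmf d n S (conv (d\<^sup>2) p q) = conv (d ^ n) (layer_pmf d n S p) (layer_pmf d n S q)"
proof -
  have fin: "finite S" using valid_layer_finite[OF assms(2)] .
  let ?P = "Pi_pmf S (\<lambda>_ _. 0) (\<lambda>_. p)" and ?Q = "Pi_pmf S (\<lambda>_ _. 0) (\<lambda>_. q)"
  have "Pi_pmf S (\<lambda>_ _. 0) (\<lambda>_. conv (d\<^sup>2) p q)
      = Pi_pmf S (\<lambda>_ _. 0) (\<lambda>_. bind_pmf p (\<lambda>a. bind_pmf q (\<lambda>b. return_pmf (mmul (d\<^sup>2) a b))))"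
    by (simp add: conv_def pair_pmf_def map_bind_pmf)
  also have "\<dots> = bind_pmf ?P (\<lambda>f. Pi_pmf S (\<lambda>_ _. 0)
                    (\<lambda>s. bind_pmf q (\<lambda>b. return_pmf (mmul (d\<^sup>2) (f s) b))))"
    by (rule Pi_pmf_bind[OF fin])
  also have "\<dots> = bind_pmf ?P (\<lambda>f. bind_pmf ?Q (\<lambda>h.
                    Pi_pmf S (\<lambda>_ _. 0) (\<lambda>s. return_pmf (mmul (d\<^sup>2) (f s) (h s)))))"
    by (intro bind_pmf_cong refl Pi_pmf_bind[OF fin])
  also have "\<dots> = bind_pmf ?P (\<lambda>f. bind_pmf ?Q (\<lambda>h.
                    return_pmf (\<lambda>s. if s \<in> S then mmul (d\<^sup>2) (f s) (h s) else (\<lambda>_ _. 0))))"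
    using fin by simp
  finally have "layer_pmf d n S (conv (d\<^sup>2) p q) = bind_pmf ?P (\<lambda>f. bind_pmf ?Q (\<lambda>h.
      return_pmf (layer_mat d n S (\<lambda>s. if s \<in> S then mmul (d\<^sup>2) (f s) (h s) else (\<lambda>_ _. 0)))))"
    unfolding layer_pmf_def by (simp add: map_bind_pmf)
  also have "\<dots> = bind_pmf ?P (\<lambda>f. bind_pmf ?Q (\<lambda>h.
      return_pmf (mmul (d ^ n) (layer_mat d n S f) (layer_mat d n S h))))"
    by (intro bind_pmf_cong refl arg_cong[where f=return_pmf])
       (subst layer_mat_mmul[OF assms], rule layer_mat_cong, simp)
  also have "\<dots> = conv (d ^ n) (layer_pmf d n S p) (layer_pmf d n S q)"
    by (simp add: conv_def pair_pmf_def layer_pmf_def map_bind_pmf bind_map_pmf)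
  finally show ?thesis .
qed

definition unitary_ensemble :: "nat \<Rightarrow> cmat pmf \<Rightarrow> bool" where
  "unitary_ensemble D \<nu> \<longleftrightarrow> finite (set_pmf \<nu>) \<and> set_pmf \<nu> \<subseteq> unitary_group D"

lemma unitary_ensemble_pmf_of_set:
  "finite G \<Longrightarrow> G \<noteq> {} \<Longrightarrow> G \<subseteq> unitary_group D \<Longrightarrow> unitary_ensemble D (pmf_of_set G)"
  by (simp add: unitary_ensemble_def)

lemma unitary_ensemble_half_mix:
  "unitary_ensemble D p \<Longrightarrow> unitary_ensemble D q \<Longrightarrow> unitary_ensemble D (half_mix p q)"
  by (simp add: unitary_ensemble_def set_pmf_half_mix)

lemma unitary_ensemble_conv:
  "unitary_ensemble D p \<Longrightarrow> unitary_ensemble D q \<Longrightarrow> unitary_ensemble D (conv D p q)"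
  by (auto simp: unitary_ensemble_def conv_def intro!: mmul_unitary)

lemma unitary_ensemble_layer_pmf:
  assumes "0 < d" "valid_layer n S" "unitary_ensemble (d\<^sup>2) \<eta>"
  shows "unitary_ensemble (d ^ n) (layer_pmf d n S \<eta>)"
proof -
  have fin: "finite S" using valid_layer_finite[OF assms(2)] .
  have "layer_mat d n S f \<in> unitary_group (d ^ n)" if "f \<in> PiE_dflt S (\<lambda>_ _. 0) (\<lambda>_. set_pmf \<eta>)" for f
    using that assms by (intro layer_mat_unitary) (auto simp: PiE_dflt_def unitary_ensemble_def)
  then show ?thesis
    using assms(3) fin by (auto simp: unitary_ensemble_def layer_pmf_def set_Pi_pmf finite_PiE_dflt)
qed

section \<open>Moment operators and norms\<close>

lemma integral_half_mix:
  fixes f :: "'a \<Rightarrow> complex"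
  assumes "finite (set_pmf p)" "finite (set_pmf q)"
  shows "(\<integral>x. f x \<partial>measure_pmf (half_mix p q))
       = ((\<integral>x. f x \<partial>measure_pmf p) + (\<integral>x. f x \<partial>measure_pmf q)) / 2"
proof -
  let ?A = "set_pmf p \<union> set_pmf q"
  have int: "(\<integral>x. f x \<partial>measure_pmf r) = (\<Sum>a\<in>?A. of_real (pmf r a) * f a)" if "set_pmf r \<subseteq> ?A" for r
    using assms that by (subst integral_measure_pmf[of ?A]) (auto simp: scaleR_conv_of_real)
  show ?thesis
    by (simp add: int set_pmf_half_mix pmf_half_mix sum_divide_distrib sum.distrib[symmetric]
                  add_divide_distrib distrib_right)
qed

lemma moment_op_half_mix:
  assumes "finite (set_pmf p)" "finite (set_pmf q)"
  shows "moment_op (measure_pmf (half_mix p q)) D t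
       = (\<lambda>r c. (moment_op (measure_pmf p) D t r c + moment_op (measure_pmf q) D t r c) / 2)"
  using assms by (auto simp: moment_op_def integral_half_mix fun_eq_iff)

lemma moment_op_pmf:
  assumes "finite (set_pmf \<nu>)" "r < D ^ (2 * t)" "c < D ^ (2 * t)"
  shows "moment_op (measure_pmf \<nu>) D t r c = (\<Sum>W\<in>set_pmf \<nu>. pmf \<nu> W * tens_entry D t W r c)"
  using assms by (simp add: moment_op_def integral_measure_pmf[of "set_pmf \<nu>"] scaleR_conv_of_real)

lemma mvmul_moment_op_pmf:
  assumes "finite (set_pmf \<nu>)" "i < D ^ (2 * t)"
  shows "mvmul (D ^ (2 * t)) (moment_op (measure_pmf \<nu>) D t) y i
       = (\<Sum>W\<in>set_pmf \<nu>. pmf \<nu> W * mvmul (D ^ (2 * t)) (tens_entry D t W) y i)"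
  using assms
  by (simp add: mvmul_def moment_op_pmf sum_distrib_left sum_distrib_right mult.assoc
                sum.swap[of _ "set_pmf \<nu>"])

lemma mvmul_diff_left: "mvmul N (\<lambda>r c. A r c - B r c) x i = mvmul N A x i - mvmul N B x i"
  by (simp add: mvmul_def left_diff_distrib sum_subtractf)

lemma mvmul_diff_right: "mvmul N A (\<lambda>j. x j - y j) i = mvmul N A x i - mvmul N A y i"
  by (simp add: mvmul_def right_diff_distrib sum_subtractf)

lemma vnorm_L2: "vnorm N a = L2_set (\<lambda>i. cmod (a i)) {..<N}"
  by (simp add: vnorm_def L2_set_def)

lemma vnorm_cong: "(\<And>i. i < N \<Longrightarrow> a i = b i) \<Longrightarrow> vnorm N a = vnorm N b"
  unfolding vnorm_def by (intro arg_cong[where f=sqrt] sum.cong) auto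

lemma vnorm_add: "vnorm N (\<lambda>i. a i + b i) \<le> vnorm N a + vnorm N b"
proof -
  have "vnorm N (\<lambda>i. a i + b i) \<le> L2_set (\<lambda>i. cmod (a i) + cmod (b i)) {..<N}"
    unfolding vnorm_L2 by (intro L2_set_mono norm_triangle_ineq) auto
  also have "\<dots> \<le> vnorm N a + vnorm N b"
    unfolding vnorm_L2 by (rule L2_set_triangle_ineq)
  finally show ?thesis .
qed

lemma vnorm_scale: "0 \<le> c \<Longrightarrow> vnorm N (\<lambda>i. complex_of_real c * a i) = c * vnorm N a"
  unfolding vnorm_L2 by (simp add: L2_set_right_distrib norm_mult)

lemma vnorm_sum:
  assumes "finite F"
  shows "vnorm N (\<lambda>i. \<Sum>w\<in>F. v w i) \<le> (\<Sum>w\<in>F. vnorm N (v w))"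
  using assms
proof (induction rule: finite_induct)
  case empty
  then show ?case by (simp add: vnorm_def)
next
  case (insert w F)
  then have "vnorm N (\<lambda>i. \<Sum>w\<in>insert w F. v w i) \<le> vnorm N (v w) + vnorm N (\<lambda>i. \<Sum>w\<in>F. v w i)"
    using vnorm_add[of N "v w"] by simp
  then show ?case using insert by simp
qed

lemma opnorm_bdd: "bdd_above ((\<lambda>x. vnorm N (mvmul N A x)) ` {x. vnorm N x \<le> 1})"
proof (rule bdd_aboveI2)
  fix x assume "x \<in> {x. vnorm N x \<le> 1}"
  then have entry: "cmod (x j) \<le> 1" if "j < N" for j
    using member_le_L2_set[of "{..<N}" j "\<lambda>i. cmod (x i)"] that by (simp add: vnorm_L2)
  have "vnorm N (mvmul N A x) \<le> (\<Sum>i<N. cmod (mvmul N A x i))"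
    unfolding vnorm_L2 by (rule L2_set_le_sum) simp
  also have "\<dots> \<le> (\<Sum>i<N. \<Sum>j<N. cmod (A i j * x j))"
    unfolding mvmul_def by (intro sum_mono norm_sum)
  also have "\<dots> \<le> (\<Sum>i<N. \<Sum>j<N. cmod (A i j))"
    using entry by (intro sum_mono) (simp add: norm_mult mult_left_le)
  finally show "vnorm N (mvmul N A x) \<le> (\<Sum>i<N. \<Sum>j<N. cmod (A i j))" .
qed

lemma opnorm_upper: "vnorm N x \<le> 1 \<Longrightarrow> vnorm N (mvmul N A x) \<le> opnorm N A"
  unfolding opnorm_def by (rule cSup_upper) (auto intro: opnorm_bdd)

lemma opnorm_least:
  assumes "\<And>x. vnorm N x \<le> 1 \<Longrightarrow> vnorm N (mvmul N A x) \<le> B"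
  shows "opnorm N A \<le> B"
proof -
  have "vnorm N (\<lambda>_. 0) \<le> 1" by (simp add: vnorm_def)
  then show ?thesis unfolding opnorm_def by (intro cSup_least) (auto intro: assms)
qed

lemma opnorm_midpoint: "opnorm N (\<lambda>r c. (A r c + B r c) / 2) \<le> (opnorm N A + opnorm N B) / 2"
proof (rule opnorm_least)
  fix x assume x: "vnorm N x \<le> 1"
  have "vnorm N (mvmul N (\<lambda>r c. (A r c + B r c) / 2) x)
      = vnorm N (\<lambda>i. complex_of_real (1/2) * mvmul N A x i + complex_of_real (1/2) * mvmul N B x i)"
    by (intro vnorm_cong)
       (simp add: mvmul_def sum.distrib sum_divide_distrib add_divide_distrib distrib_right)
  also have "\<dots> \<le> vnorm N (\<lambda>i. complex_of_real (1/2) * mvmul N A x i)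
                + vnorm N (\<lambda>i. complex_of_real (1/2) * mvmul N B x i)"
    by (rule vnorm_add)
  also have "\<dots> = vnorm N (mvmul N A x) / 2 + vnorm N (mvmul N B x) / 2"
    using vnorm_scale[of "1/2" N "mvmul N A x"] vnorm_scale[of "1/2" N "mvmul N B x"] by simp
  also have "\<dots> \<le> (opnorm N A + opnorm N B) / 2"
    using opnorm_upper[OF x, of A] opnorm_upper[OF x, of B] by simp
  finally show "vnorm N (mvmul N (\<lambda>r c. (A r c + B r c) / 2) x) \<le> (opnorm N A + opnorm N B) / 2" .
qed

lemma gap_half_mix:
  assumes "finite (set_pmf p)" "finite (set_pmf q)"
  shows "(gap D \<mu> (measure_pmf p) t + gap D \<mu> (measure_pmf q) t) / 2
       \<le> gap D \<mu> (measure_pmf (half_mix p q)) t"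
proof -
  let ?T = "\<lambda>\<nu> r c. moment_op \<nu> D t r c - moment_op \<mu> D t r c"
  have "?T (measure_pmf (half_mix p q)) = (\<lambda>r c. (?T (measure_pmf p) r c + ?T (measure_pmf q) r c) / 2)"
    by (simp add: moment_op_half_mix[OF assms] fun_eq_iff field_simps)
  then show ?thesis
    using opnorm_midpoint[of "D ^ (2 * t)" "?T (measure_pmf p)" "?T (measure_pmf q)"]
    by (simp add: gap_def)
qed

definition cinner :: "nat \<Rightarrow> (nat \<Rightarrow> complex) \<Rightarrow> (nat \<Rightarrow> complex) \<Rightarrow> complex" where
  "cinner N a b = (\<Sum>i<N. cnj (a i) * b i)"

lemma cinner_self: "cinner N a a = complex_of_real ((vnorm N a)\<^sup>2)"
proof -
  have "(vnorm N a)\<^sup>2 = (\<Sum>i<N. (cmod (a i))\<^sup>2)" by (simp add: vnorm_def sum_nonneg)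
  then show ?thesis
    unfolding cinner_def of_real_sum
    by (simp add: complex_norm_square mult.commute del: of_real_power)
qed

lemma cinner_commute: "cnj (cinner N a b) = cinner N b a"
  by (simp add: cinner_def mult.commute)

lemma cinner_cong:
  "(\<And>i. i < N \<Longrightarrow> a i = a' i) \<Longrightarrow> (\<And>i. i < N \<Longrightarrow> b i = b' i) \<Longrightarrow> cinner N a b = cinner N a' b'"
  unfolding cinner_def by (intro sum.cong) auto

lemma cinner_diff_self:
  "cinner N (\<lambda>i. a i - b i) (\<lambda>i. a i - b i) = cinner N a a - cinner N a b - cinner N b a + cinner N b b"
  unfolding cinner_def by (simp add: algebra_simps sum.distrib sum_subtractf)

lemma vnorm_nonneg: "0 \<le> vnorm N a"
  by (simp add: vnorm_def sum_nonneg)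

lemma cinner_tens_unitary:
  assumes "0 < D" "U \<in> unitary_group D"
  shows "cinner (D ^ (2 * t)) (mvmul (D ^ (2 * t)) (tens_entry D t U) a)
                              (mvmul (D ^ (2 * t)) (tens_entry D t U) b)
       = cinner (D ^ (2 * t)) a b"
proof -
  let ?N = "D ^ (2 * t)" and ?T = "tens_entry D t U"
  have "cinner ?N (mvmul ?N ?T a) (mvmul ?N ?T b)
      = (\<Sum>i<?N. \<Sum>j<?N. \<Sum>k<?N. cnj (a j) * b k * (cnj (?T i j) * ?T i k))"
    unfolding cinner_def mvmul_def cnj_sum sum_product by (intro sum.cong refl) (simp add: mult_ac)
  also have "\<dots> = (\<Sum>j<?N. \<Sum>k<?N. \<Sum>i<?N. cnj (a j) * b k * (cnj (?T i j) * ?T i k))"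
    by (subst sum.swap) (rule sum.cong[OF refl], rule sum.swap)
  also have "\<dots> = (\<Sum>j<?N. \<Sum>k<?N. cnj (a j) * b k * (\<Sum>i<?N. cnj (?T i j) * ?T i k))"
    by (simp add: sum_distrib_left)
  also have "\<dots> = (\<Sum>j<?N. \<Sum>k<?N. cnj (a j) * b k * (if j = k then 1 else 0))"
    by (intro sum.cong refl) (simp add: tens_entry_unitary_orthonormal[OF assms])
  also have "\<dots> = cinner ?N a b"
    by (simp add: cinner_def if_distrib cong: if_cong)
  finally show ?thesis .
qed

lemma vnorm_tens_unitary:
  assumes "0 < D" "U \<in> unitary_group D"
  shows "vnorm (D ^ (2 * t)) (mvmul (D ^ (2 * t)) (tens_entry D t U) y) = vnorm (D ^ (2 * t)) y"
proof -
  have "complex_of_real ((vnorm (D ^ (2 * t)) (mvmul (D ^ (2 * t)) (tens_entry D t U) y))\<^sup>2)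
      = complex_of_real ((vnorm (D ^ (2 * t)) y)\<^sup>2)"
    using cinner_tens_unitary[OF assms, of t y y] by (simp only: cinner_self)
  then show ?thesis by (simp only: of_real_eq_iff power2_eq_iff_nonneg vnorm_nonneg)
qed

lemma vnorm_moment_op_pmf_le:
  assumes "0 < D" "unitary_ensemble D \<nu>"
  shows "vnorm (D ^ (2 * t)) (mvmul (D ^ (2 * t)) (moment_op (measure_pmf \<nu>) D t) y)
       \<le> vnorm (D ^ (2 * t)) y"
proof -
  let ?N = "D ^ (2 * t)" and ?S = "set_pmf \<nu>"
  have fin: "finite ?S" and unitary: "?S \<subseteq> unitary_group D"
    using assms(2) by (simp_all add: unitary_ensemble_def)
  have "vnorm ?N (mvmul ?N (moment_op (measure_pmf \<nu>) D t) y)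
      = vnorm ?N (\<lambda>i. \<Sum>W\<in>?S. complex_of_real (pmf \<nu> W) * mvmul ?N (tens_entry D t W) y i)"
    using fin by (intro vnorm_cong) (simp add: mvmul_moment_op_pmf)
  also have "\<dots> \<le> (\<Sum>W\<in>?S. vnorm ?N (\<lambda>i. complex_of_real (pmf \<nu> W) * mvmul ?N (tens_entry D t W) y i))"
    using fin by (rule vnorm_sum)
  also have "\<dots> = (\<Sum>W\<in>?S. pmf \<nu> W * vnorm ?N y)"
    using unitary by (intro sum.cong refl) (auto simp: vnorm_scale vnorm_tens_unitary[OF assms(1)])
  also have "\<dots> = vnorm ?N y"
    using sum_pmf_eq_1[OF fin order_refl] by (simp add: sum_distrib_right[symmetric])
  finally show ?thesis .
qed

section \<open>Haar measure\<close>

lemma continuous_on_entry: "continuous_on UNIV (\<lambda>U::cmat. U i j)"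
  by (rule continuous_on_product_then_coordinatewise) simp

lemma borel_measurable_tens_entry: "(\<lambda>U. tens_entry D t U r c) \<in> borel_measurable borel"
  unfolding tens_entry_def
  by (intro borel_measurable_continuous_onI continuous_intros continuous_on_entry)

lemma borel_measurable_mmul_left: "(\<lambda>U. mmul D V U) \<in> borel_measurable borel"
proof (intro borel_measurable_continuous_onI continuous_on_coordinatewise_then_product)
  fix i j
  show "continuous_on UNIV (\<lambda>U. mmul D V U i j)"
  proof (cases "i < D \<and> j < D")
    case True
    then show ?thesis by (simp add: mmul_def continuous_intros continuous_on_entry)
  next
    case False
    then show ?thesis unfolding mmul_def by (simp only: if_not_P[OF False] if_False continuous_on_const)
  qed
qed

locale haar_moments =
  fixes D :: nat and \<mu> :: "cmat measure" and t :: nat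
  assumes haar: "is_haar D \<mu>" and dim_pos: "0 < D"
begin

abbreviation "N \<equiv> D ^ (2 * t)"
abbreviation "P \<equiv> moment_op \<mu> D t"

lemma prob_space_haar: "prob_space \<mu>"
  using haar by (simp add: is_haar_def)

lemma borel_measurable_haar: "f \<in> borel_measurable borel \<Longrightarrow> f \<in> borel_measurable \<mu>"
  using haar measurable_cong_sets by (auto simp: is_haar_def)

lemma AE_unitary: "AE U in \<mu>. U \<in> unitary_group D"
proof -
  have "unitary_group D \<in> sets \<mu>" "emeasure \<mu> (unitary_group D) = 1"
    using haar by (auto simp: is_haar_def)
  then show ?thesis using prob_space.AE_in_set_eq_1[OF prob_space_haar] by (simp add: measure_def)
qed

lemma integrable_tens_entry: "integrable \<mu> (\<lambda>U. tens_entry D t U r c)"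
proof -
  interpret prob_space \<mu> by (rule prob_space_haar)
  show ?thesis
    by (rule integrable_const_bound[where B=1])
       (use AE_unitary norm_tens_entry_le_1
         in \<open>auto elim: AE_mp intro: borel_measurable_haar borel_measurable_tens_entry\<close>)
qed

lemma integral_mmul_left:
  assumes "V \<in> unitary_group D" "f \<in> borel_measurable borel"
  shows "(\<integral>U. f (mmul D V U) \<partial>\<mu>) = (\<integral>U. (f U :: complex) \<partial>\<mu>)"
proof -
  have "distr \<mu> borel (\<lambda>U. mmul D V U) = \<mu>" using haar assms(1) by (simp add: is_haar_def)
  then have "(\<integral>U. f U \<partial>\<mu>) = (\<integral>U. f U \<partial>distr \<mu> borel (\<lambda>U. mmul D V U))" by simp
  also have "\<dots> = (\<integral>U. f (mmul D V U) \<partial>\<mu>)"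
    by (rule integral_distr[OF borel_measurable_haar[OF borel_measurable_mmul_left] assms(2)])
  finally show ?thesis by simp
qed

lemma tens_entry_haar_left:
  assumes "V \<in> unitary_group D" "r < N" "c < N"
  shows "(\<Sum>k<N. tens_entry D t V r k * P k c) = P r c"
proof -
  have "(\<Sum>k<N. tens_entry D t V r k * P k c)
      = (\<integral>U. (\<Sum>k<N. tens_entry D t V r k * tens_entry D t U k c) \<partial>\<mu>)"
    using assms integrable_tens_entry by (simp add: moment_op_def)
  also have "\<dots> = (\<integral>U. tens_entry D t (mmul D V U) r c \<partial>\<mu>)"
    by (simp add: tens_entry_mmul[OF dim_pos])
  also have "\<dots> = P r c"
    using assms integral_mmul_left[OF assms(1) borel_measurable_tens_entry] by (simp add: moment_op_def)
  finally show ?thesis .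
qed

lemma mvmul_tens_entry_haar:
  assumes "V \<in> unitary_group D" "i < N"
  shows "mvmul N (tens_entry D t V) (mvmul N P x) i = mvmul N P x i"
proof -
  have "mvmul N (tens_entry D t V) (mvmul N P x) i = (\<Sum>k<N. \<Sum>j<N. tens_entry D t V i k * P k j * x j)"
    by (simp add: mvmul_def sum_distrib_left mult_ac)
  also have "\<dots> = (\<Sum>j<N. (\<Sum>k<N. tens_entry D t V i k * P k j) * x j)"
    by (subst sum.swap) (simp add: sum_distrib_right)
  also have "\<dots> = mvmul N P x i"
    using tens_entry_haar_left[OF assms] by (simp add: mvmul_def)
  finally show ?thesis .
qed

lemma mvmul_haar_integral:
  assumes "i < N"
  shows "mvmul N P x i = (\<integral>U. mvmul N (tens_entry D t U) x i \<partial>\<mu>)"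
  using assms integrable_tens_entry by (simp add: mvmul_def moment_op_def)

lemma cinner_haar: "cinner N (mvmul N P x) (mvmul N P x) = cinner N (mvmul N P x) x"
proof -
  let ?Px = "mvmul N P x" and ?T = "\<lambda>U. mvmul N (tens_entry D t U) x"
  have int: "integrable \<mu> (\<lambda>U. c * ?T U i)" for c i
    unfolding mvmul_def sum_distrib_left
    by (intro Bochner_Integration.integrable_sum integrable_mult_right integrable_mult_left integrable_tens_entry)
  have "cinner N ?Px ?Px = (\<integral>U. cinner N ?Px (?T U) \<partial>\<mu>)"
    using int by (simp add: cinner_def mvmul_haar_integral)
  also have "\<dots> = (\<integral>U. cinner N ?Px x \<partial>\<mu>)"
  proof (rule integral_cong_AE)
    show "(\<lambda>U. cinner N ?Px (?T U)) \<in> borel_measurable \<mu>"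
      using int unfolding cinner_def by (intro borel_measurable_sum borel_measurable_integrable)
    show "AE U in \<mu>. cinner N ?Px (?T U) = cinner N ?Px x"
      using AE_unitary
    proof (rule AE_mp, intro AE_I2 impI)
      fix U assume U: "U \<in> unitary_group D"
      have "cinner N ?Px (?T U) = cinner N (mvmul N (tens_entry D t U) ?Px) (?T U)"
        by (rule cinner_cong) (simp_all add: mvmul_tens_entry_haar[OF U])
      also have "\<dots> = cinner N ?Px x" by (rule cinner_tens_unitary[OF dim_pos U])
      finally show "cinner N ?Px (?T U) = cinner N ?Px x" .
    qed
  qed simp
  also have "\<dots> = cinner N ?Px x"
    using prob_space.prob_space[OF prob_space_haar] by simp
  finally show ?thesis .
qed

lemma vnorm_diff_haar_le: "vnorm N (\<lambda>i. x i - mvmul N P x i) \<le> vnorm N x"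
proof -
  let ?Px = "mvmul N P x"
  have "cinner N x ?Px = cinner N ?Px ?Px"
    by (metis cinner_haar cinner_commute cinner_self complex_cnj_complex_of_real)
  then have "cinner N (\<lambda>i. x i - ?Px i) (\<lambda>i. x i - ?Px i) = cinner N x x - cinner N ?Px ?Px"
    by (simp add: cinner_diff_self cinner_haar)
  then have "complex_of_real ((vnorm N (\<lambda>i. x i - ?Px i))\<^sup>2)
      = complex_of_real ((vnorm N x)\<^sup>2 - (vnorm N ?Px)\<^sup>2)"
    by (simp only: cinner_self of_real_diff)
  then have "(vnorm N (\<lambda>i. x i - ?Px i))\<^sup>2 = (vnorm N x)\<^sup>2 - (vnorm N ?Px)\<^sup>2"
    by (rule of_real_eq_iff[THEN iffD1])
  then have "(vnorm N (\<lambda>i. x i - ?Px i))\<^sup>2 \<le> (vnorm N x)\<^sup>2" by simp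
  then show ?thesis using vnorm_nonneg by (rule power2_le_imp_le)
qed

lemma mvmul_moment_op_pmf_haar:
  assumes "unitary_ensemble D \<nu>" "i < N"
  shows "mvmul N (moment_op (measure_pmf \<nu>) D t) (mvmul N P x) i = mvmul N P x i"
proof -
  have fin: "finite (set_pmf \<nu>)" and unitary: "set_pmf \<nu> \<subseteq> unitary_group D"
    using assms(1) by (simp_all add: unitary_ensemble_def)
  have "mvmul N (moment_op (measure_pmf \<nu>) D t) (mvmul N P x) i
      = (\<Sum>W\<in>set_pmf \<nu>. pmf \<nu> W * mvmul N P x i)"
    using fin unitary assms(2) by (auto simp: mvmul_moment_op_pmf mvmul_tens_entry_haar intro!: sum.cong)
  also have "\<dots> = mvmul N P x i"
    using sum_pmf_eq_1[OF fin order_refl] by (simp add: sum_distrib_right[symmetric] flip: of_real_sum)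
  finally show ?thesis .
qed

lemma gap_nonneg:
  assumes "unitary_ensemble D \<nu>"
  shows "0 \<le> gap D \<mu> (measure_pmf \<nu>) t"
proof -
  let ?T = "moment_op (measure_pmf \<nu>) D t"
  have "opnorm N (\<lambda>r c. ?T r c - P r c) \<le> 1"
  proof (rule opnorm_least)
    fix x assume x: "vnorm N x \<le> 1"
    have "vnorm N (mvmul N (\<lambda>r c. ?T r c - P r c) x)
        = vnorm N (mvmul N ?T (\<lambda>i. x i - mvmul N P x i))"
      using assms
      by (intro vnorm_cong) (simp add: mvmul_diff_left mvmul_diff_right mvmul_moment_op_pmf_haar)
    also have "\<dots> \<le> vnorm N (\<lambda>i. x i - mvmul N P x i)"
      by (rule vnorm_moment_op_pmf_le[OF dim_pos assms])
    also have "\<dots> \<le> 1"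
      using vnorm_diff_haar_le x by (rule order_trans)
    finally show "vnorm N (mvmul N (\<lambda>r c. ?T r c - P r c) x) \<le> 1" .
  qed
  then show ?thesis by (simp add: gap_def)
qed

lemma gap_half_mix_ge_half:
  assumes "unitary_ensemble D p" "unitary_ensemble D q"
  shows "1/2 * gap D \<mu> (measure_pmf p) t \<le> gap D \<mu> (measure_pmf (half_mix p q)) t"
proof -
  have "1/2 * gap D \<mu> (measure_pmf p) t
      \<le> (gap D \<mu> (measure_pmf p) t + gap D \<mu> (measure_pmf q) t) / 2"
    using gap_nonneg[OF assms(2)] by simp
  also have "\<dots> \<le> gap D \<mu> (measure_pmf (half_mix p q)) t"
    using assms by (intro gap_half_mix) (simp_all add: unitary_ensemble_def)
  finally show ?thesis .
qed
end

theorem lemma6: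
  fixes d n t :: nat and G :: "cmat set" and \<mu> :: "cmat measure"
  assumes "0 < d" and "even n" and "2 \<le> n"
    and "finite G" and "G \<noteq> {}" and "G \<subseteq> unitary_group (d ^ 2)"
    and "is_haar (d ^ n) \<mu>"
    and "0 < t"
  shows "gap (d ^ n) \<mu>
           (measure_pmf (conv (d ^ n) (nu_par d n (pmf_of_set G))
                                      (nu_par d n (pmf_of_set (adj ` G))))) t
         \<ge> 1/2 * gap (d ^ n) \<mu>
           (measure_pmf (nu_par d n (conv (d ^ 2) (pmf_of_set G) (pmf_of_set (adj ` G))))) t"
proof -
  interpret haar_moments "d ^ n" \<mu> t
    using assms(1,7) by unfold_locales simp_all
  define \<eta> \<eta>' where "\<eta> = pmf_of_set G" and "\<eta>' = pmf_of_set (adj ` G)"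
  let ?E = "{s. even s \<and> s + 1 < n}" and ?O = "{s. odd s \<and> s + 1 < n}"
  let ?L = "\<lambda>S \<zeta>. layer_pmf d n S \<zeta>"
  define cross where
    "cross = half_mix (conv (d ^ n) (?L ?E \<eta>) (?L ?O \<eta>')) (conv (d ^ n) (?L ?O \<eta>) (?L ?E \<eta>'))"
  have valid: "valid_layer n ?E" "valid_layer n ?O"
    by (auto simp: valid_layer_def)
  have split: "conv (d ^ n) (nu_par d n \<eta>) (nu_par d n \<eta>')
      = half_mix (nu_par d n (conv (d\<^sup>2) \<eta> \<eta>')) cross"
    by (simp only: nu_par_half_mix conv_half_mix layer_pmf_conv[OF assms(1)] valid cross_def)
  have "unitary_ensemble (d\<^sup>2) \<eta>" "unitary_ensemble (d\<^sup>2) \<eta>'"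
    using assms(4-6) adj_unitary by (auto simp: \<eta>_def \<eta>'_def intro!: unitary_ensemble_pmf_of_set)
  then have "unitary_ensemble (d ^ n) (nu_par d n (conv (d\<^sup>2) \<eta> \<eta>'))" "unitary_ensemble (d ^ n) cross"
    using assms(1) valid
    by (simp_all add: cross_def nu_par_half_mix layer_pmf_conv unitary_ensemble_half_mix
                      unitary_ensemble_conv unitary_ensemble_layer_pmf)
  then have "1/2 * gap (d ^ n) \<mu> (nu_par d n (conv (d\<^sup>2) \<eta> \<eta>')) t
      \<le> gap (d ^ n) \<mu> (half_mix (nu_par d n (conv (d\<^sup>2) \<eta> \<eta>')) cross) t"
    by (rule gap_half_mix_ge_half)
  then show ?thesis unfolding \<eta>_def[symmetric] \<eta>'_def[symmetric] split .
qed

end
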